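(* Let $E(x)=2^{2^{2^x}}$. For any strictly increasing sequence of natural numbers $3\leq x_0<x_1<\dots<x_{E(x_0)+8}$ we have $\omega^3[x_0][x_1]\cdots[x_{E(x_0)+8}]>0$.
   Context: Ordinals are notations below $\varepsilon_0$, i.e. formal sums $\omega^{\alpha_0}+\dots+\omega^{\alpha_n}$ with non-increasing exponents (the empty sum is $0$), ordered lexicographically (Cantor normal form order). Write $1=\omega^0$, $\omega=\omega^1$, and $\omega^3=\omega^{1+1+1}$. Fundamental sequences, for $\alpha=\omega^{\alpha_0}+\dots+\omega^{\alpha_n}$ and $x\in\mathbb{N}$: $0[x]=0$. If $\alpha_n=0$ then $\alpha[x]=\omega^{\alpha_0}+\dots+\omega^{\alpha_{n-1}}$. If $\alpha_n=\beta+1$ then $\alpha[x]=\omega^{\alpha_0}+\dots+\omega^{\alpha_{n-1}}+\omega^\beta\cdot x$ ($x$ copies of $\omega^\beta$). If $\alpha_n$ is a nonzero non-successor then $\alpha[x]=\omega^{\alpha_0}+\dots+\omega^{\alpha_{n-1}}+\omega^{\alpha_n[x]}$. $\alpha[x_0]\cdots[x_R]$ denotes iterated application. *)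

theory Defs
  imports Main
begin

text \<open>Cantor normal form notations below epsilon_0:
  C [a0, ..., an] denotes omega^a0 + ... + omega^an (exponents intended non-increasing).\<close>
datatype cnf = C "cnf list"

definition zero_cnf :: cnf where "zero_cnf = C []"

fun cnf_less :: "cnf \<Rightarrow> cnf \<Rightarrow> bool"
and cnf_list_less :: "cnf list \<Rightarrow> cnf list \<Rightarrow> bool" where
  "cnf_less (C as) (C bs) = cnf_list_less as bs"
| "cnf_list_less [] [] = False"
| "cnf_list_less [] (b # bs) = True"
| "cnf_list_less (a # as) [] = False"
| "cnf_list_less (a # as) (b # bs) = (cnf_less a b \<or> (a = b \<and> cnf_list_less as bs))"

function fs :: "cnf \<Rightarrow> nat \<Rightarrow> cnf" where
  "fs (C as) x =
     (if as = [] then C []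
      else (case last as of
              C [] \<Rightarrow> C (butlast as)
            | C es \<Rightarrow>
                (if last es = C [] then C (butlast as @ replicate x (C (butlast es)))
                 else C (butlast as @ [fs (last as) x]))))"
  by pat_completeness auto
termination
proof (relation "measure (\<lambda>(a, x). size a)")
  show "wf (measure (\<lambda>(a, x). size a))" by simp
next
  fix as :: "cnf list" and x :: nat and x2 :: "cnf list"
  assume "as \<noteq> []"
  then have "last as \<in> set as" by simp
  then have "size (last as) < size (C as)"
    by (induct as) (auto simp: size_list_estimation')
  then show "((last as, x), C as, x) \<in> measure (\<lambda>(a, x). size a)" by simp
qed

definition fs_iter :: "cnf \<Rightarrow> nat list \<Rightarrow> cnf" where
  "fs_iter a xs = foldl fs a xs"

text \<open>1 = omega^0, 3 = 1+1+1, omega^3 = omega^(1+1+1).\<close>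
definition omega3 :: cnf where
  "omega3 = C [C [C [], C [], C []]]"

definition E :: "nat \<Rightarrow> nat" where
  "E x = 2 ^ (2 ^ (2 ^ x))"

end

theory Submission
  imports Defs
begin

text \<open>The notations reached from \<open>\<omega>\<^sup>3\<close> are \<open>\<omega>\<^sup>2\<cdot>a + \<omega>\<cdot>b + c\<close>, i.e. digit triples \<open>(a, b, c)\<close>,
  and a fundamental-sequence step at argument \<open>y\<close> is a countdown with reloading: \<open>c\<close> drops by one,
  or else \<open>b\<close> drops and \<open>c := y\<close>, or else \<open>a\<close> drops and \<open>b := y\<close>. If the arguments satisfy
  \<open>x\<^sub>i \<ge> x\<^sub>0 + i\<close>, removing one \<open>\<omega>\<close> at time \<open>t\<close> takes at least \<open>t + 1\<close> steps, so clearing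
  \<open>\<omega>\<cdot>b\<close> multiplies the time by \<open>2\<^sup>b\<close>, and clearing one \<open>\<omega>\<^sup>2\<close> at time \<open>t\<close> lasts until time
  \<open>2\<^bsup>x\<^sub>t\<^esup>(t + 1)\<close>. Since \<open>x\<^sub>0 \<ge> 3\<close>, three copies of \<open>\<omega>\<^sup>2\<close> push the time past
  \<open>2^2^2^(x\<^sub>0+1) \<ge> E(x\<^sub>0) + 9\<close> before the notation can reach \<open>0\<close>.\<close>

definition omega2_poly :: "nat \<times> nat \<times> nat \<Rightarrow> cnf" where
  "omega2_poly s = (case s of (a, b, c) \<Rightarrow>
     C (replicate a (C [C [], C []]) @ replicate b (C [C []]) @ replicate c (C [])))"

fun fs_digits :: "nat \<Rightarrow> nat \<times> nat \<times> nat \<Rightarrow> nat \<times> nat \<times> nat" where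
  "fs_digits y (a, b, c) =
     (if c > 0 then (a, b, c - 1)
      else if b > 0 then (a, b - 1, y)
      else if a > 0 then (a - 1, y, 0)
      else (0, 0, 0))"

fun fs_run :: "(nat \<Rightarrow> nat) \<Rightarrow> nat \<Rightarrow> nat \<Rightarrow> nat \<times> nat \<times> nat \<Rightarrow> nat \<times> nat \<times> nat" where
  "fs_run x t 0 s = s"
| "fs_run x t (Suc k) s = fs_run x (Suc t) k (fs_digits (x t) s)"

lemma fs_omega2_poly: "fs (omega2_poly s) y = omega2_poly (fs_digits y s)"
proof -
  obtain a b c where s: "s = (a, b, c)" by (cases s) auto
  consider (units) c' where "c = Suc c'"
    | (omegas) b' where "c = 0" "b = Suc b'"
    | (omega_squares) a' where "c = 0" "b = 0" "a = Suc a'"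
    | (zero) "a = 0" "b = 0" "c = 0"
    by (cases c; cases b; cases a) auto
  then show ?thesis
  proof cases
    case units
    then have "omega2_poly s =
        C ((replicate a (C [C [], C []]) @ replicate b (C [C []]) @ replicate c' (C [])) @ [C []])"
      by (simp add: s omega2_poly_def replicate_append_same[symmetric])
    then show ?thesis using units by (simp only:) (simp add: s omega2_poly_def butlast_append)
  next
    case omegas
    then have "omega2_poly s = C ((replicate a (C [C [], C []]) @ replicate b' (C [C []])) @ [C [C []]])"
      by (simp add: s omega2_poly_def replicate_append_same[symmetric])
    then show ?thesis using omegas by (simp only:) (simp add: s omega2_poly_def butlast_append)
  next
    case omega_squares
    then have "omega2_poly s = C (replicate a' (C [C [], C []]) @ [C [C [], C []]])"
      by (simp add: s omega2_poly_def replicate_append_same[symmetric])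
    then show ?thesis using omega_squares by (simp only:) (simp add: s omega2_poly_def butlast_append)
  next
    case zero
    then show ?thesis by (simp add: s omega2_poly_def)
  qed
qed

lemma fs_omega3: "fs omega3 y = omega2_poly (y, 0, 0)"
  by (simp add: omega3_def omega2_poly_def)

lemma foldl_fs_omega2_poly:
  "foldl fs (omega2_poly s) (map x [t..<t + k]) = omega2_poly (fs_run x t k s)"
proof (induction k arbitrary: t s)
  case 0
  then show ?case by simp
next
  case (Suc k)
  have "[t..<t + Suc k] = t # [Suc t..<Suc t + k]" by (simp add: upt_conv_Cons)
  then show ?case using Suc[where t="Suc t" and s="fs_digits (x t) s"] by (simp add: fs_omega2_poly)
qed

lemma fs_iter_omega3:
  "fs_iter omega3 (map x [0..<Suc n]) = omega2_poly (fs_run x 1 n (x 0, 0, 0))"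
proof -
  have "[0..<Suc n] = 0 # [1..<1 + n]" by (simp add: upt_conv_Cons)
  then show ?thesis using foldl_fs_omega2_poly[of "(x 0, 0, 0)" x 1 n]
    by (simp add: fs_iter_def fs_omega3)
qed

lemma omega2_poly_pos:
  assumes "s \<noteq> (0, 0, 0)"
  shows "cnf_less zero_cnf (omega2_poly s)"
proof -
  obtain a b c where s: "s = (a, b, c)" by (cases s) auto
  have "replicate a (C [C [], C []]) @ replicate b (C [C []]) @ replicate c (C []) \<noteq> []"
    using assms s by auto
  then obtain d ds where
      "replicate a (C [C [], C []]) @ replicate b (C [C []]) @ replicate c (C []) = d # ds"
    by (meson neq_Nil_conv)
  then show ?thesis by (simp add: s omega2_poly_def zero_cnf_def)
qed

lemma fs_run_add: "fs_run x t (k + l) s = fs_run x (t + k) l (fs_run x t k s)"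
  by (induction k arbitrary: t s) auto

lemma fs_run_zero: "fs_run x t k (0, 0, 0) = (0, 0, 0)"
  by (induction k arbitrary: t) auto

lemma fs_run_stays_zero:
  assumes "fs_run x t k s = (0, 0, 0)" and "k \<le> l"
  shows "fs_run x t l s = (0, 0, 0)"
proof -
  obtain d where "l = k + d" using assms(2) le_Suc_ex by blast
  then show ?thesis using assms(1) by (simp add: fs_run_add fs_run_zero)
qed

lemma fs_run_units: "fs_run x t c (a, b, c) = (a, b, 0)"
  by (induction c arbitrary: t) auto

lemma fs_run_omegas:
  assumes "\<And>i. i \<le> x i"
  shows "\<exists>k. fs_run x t k (a, b + m, 0) = (a, m, 0) \<and> 2 ^ b * t \<le> t + k"
proof (induction b arbitrary: t)
  case 0
  show ?case by (rule exI[of _ 0]) simp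
next
  case (Suc b)
  define t' where "t' = t + (1 + x t)"
  obtain k where k: "fs_run x t' k (a, b + m, 0) = (a, m, 0)" "2 ^ b * t' \<le> t' + k"
    using Suc[of t'] by blast
  have "fs_run x t (1 + x t) (a, Suc b + m, 0) = (a, b + m, 0)"
    using fs_run_units[of x "Suc t" "x t" a "b + m"] by simp
  then have "fs_run x t ((1 + x t) + k) (a, Suc b + m, 0) = (a, m, 0)"
    using k(1) by (simp add: fs_run_add t'_def)
  moreover have "2 ^ Suc b * t \<le> 2 ^ b * t'"
    using mult_le_mono2[of "2 * t" t' "2 ^ b"] assms[of t] by (simp add: t'_def)
  ultimately show ?case using k(2) by (intro exI[of _ "(1 + x t) + k"]) (auto simp: t'_def)
qed

lemma fs_run_omega_square:
  assumes "\<And>i. i \<le> x i"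
  shows "\<exists>k. fs_run x t k (Suc a, 0, 0) = (a, 0, 0) \<and> 2 ^ x t * Suc t \<le> t + k"
proof -
  obtain k where "fs_run x (Suc t) k (a, x t + 0, 0) = (a, 0, 0)" "2 ^ x t * Suc t \<le> Suc t + k"
    using fs_run_omegas[OF assms, of "Suc t" a "x t" 0] by blast
  then show ?thesis by (intro exI[of _ "Suc k"]) simp
qed

lemma fs_run_three_omega_squares:
  assumes grow: "\<And>i. m + i \<le> x i" and "1 \<le> m"
  shows "\<exists>K. fs_run x 1 K (Suc (Suc (Suc a)), 0, 0) = (a, 1, 0) \<and> 2 ^ 2 ^ 2 ^ (m + 1) \<le> 1 + K"
proof -
  have x_ge: "\<And>i. i \<le> x i" using grow le_add2 order_trans by blast
  obtain k1 where k1: "fs_run x 1 k1 (Suc (Suc (Suc a)), 0, 0) = (Suc (Suc a), 0, 0)"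
      "2 ^ x 1 * 2 \<le> 1 + k1"
    using fs_run_omega_square[OF x_ge, where t=1 and a="Suc (Suc a)"] by (auto simp: mult_2_right)
  define t1 where "t1 = 1 + k1"
  obtain k2 where k2: "fs_run x t1 k2 (Suc (Suc a), 0, 0) = (Suc a, 0, 0)"
      "2 ^ x t1 * Suc t1 \<le> t1 + k2"
    using fs_run_omega_square[OF x_ge] by blast
  define t2 where "t2 = t1 + k2"
  have x_t2: "x t2 = (x t2 - 1) + 1" using grow[of t2] assms(2) by simp
  have step3: "fs_run x t2 1 (Suc a, 0, 0) = (a, (x t2 - 1) + 1, 0)"
    using x_t2 by simp
  obtain k3 where k3: "fs_run x (t2 + 1) k3 (a, (x t2 - 1) + 1, 0) = (a, 1, 0)"
      "2 ^ (x t2 - 1) * (t2 + 1) \<le> t2 + 1 + k3"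
    using fs_run_omegas[OF x_ge] by blast
  define K where "K = k1 + k2 + 1 + k3"
  have "fs_run x 1 K (Suc (Suc (Suc a)), 0, 0) = (a, 1, 0)"
    unfolding K_def fs_run_add using k1(1) k2(1) step3 k3(1) by (simp add: t1_def t2_def)
  moreover have "2 ^ 2 ^ 2 ^ (m + 1) \<le> 1 + K"
  proof -
    have "(2::nat) ^ (m + 1) \<le> 2 ^ x 1" using grow[of 1] by (intro power_increasing) auto
    then have t1: "2 ^ (m + 1) \<le> t1" using k1(2) by (simp add: t1_def)
    have "(2::nat) ^ t1 \<le> 2 ^ x t1" using x_ge[of t1] by (intro power_increasing) auto
    also have "\<dots> \<le> 2 ^ x t1 * Suc t1" by simp
    also have "\<dots> \<le> t2" using k2(2) by (simp add: t2_def)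
    finally have t2: "2 ^ t1 \<le> t2" .
    have "(2::nat) ^ t2 \<le> 2 ^ (x t2 - 1)" using grow[of t2] assms(2)
      by (intro power_increasing) auto
    also have "\<dots> \<le> 2 ^ (x t2 - 1) * (t2 + 1)" by simp
    also have "\<dots> \<le> 1 + K" using k3(2) by (simp add: K_def t1_def t2_def)
    finally have "2 ^ t2 \<le> 1 + K" .
    with t1 t2 show ?thesis by (meson order_trans power_increasing one_le_numeral)
  qed
  ultimately show ?thesis by blast
qed

lemma strictly_increasing_prefix_ge:
  fixes x :: "nat \<Rightarrow> nat"
  assumes "\<forall>i < n. x i < x (Suc i)" and "i \<le> n"
  shows "x 0 + i \<le> x i"
  using assms(2)
proof (induction i)
  case (Suc i)
  then have "x i < x (Suc i)" using assms(1) by simp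
  then show ?case using Suc by simp
qed simp

lemma E_plus_9_le_tower:
  assumes "3 \<le> n"
  shows "E n + 9 \<le> 2 ^ 2 ^ 2 ^ (n + 1)"
proof -
  define p :: nat where "p = 2 ^ n"
  have "8 \<le> p" unfolding p_def using power_increasing[of 3 n "2::nat"] assms by simp
  then have q: "(256::nat) \<le> 2 ^ p" using power_increasing[of 8 p "2::nat"] by simp
  then have "2 * (2::nat) ^ p \<le> 2 ^ p * 2 ^ p" using mult_le_mono1[of 2 "2 ^ p" "2 ^ p"] by simp
  then have "(2::nat) ^ p + 4 \<le> 2 ^ p * 2 ^ p" using q by linarith
  also have "\<dots> = 2 ^ 2 ^ (n + 1)" by (simp add: p_def power_add[symmetric] mult_2[symmetric])
  finally have p4: "2 ^ p + 4 \<le> (2::nat) ^ 2 ^ (n + 1)" .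
  have "(2::nat) ^ (2 ^ p + 4) = 16 * E n" by (simp add: E_def p_def power_add)
  moreover have "1 \<le> E n" by (simp add: E_def)
  ultimately have "E n + 9 \<le> 2 ^ (2 ^ p + 4)" by linarith
  also have "\<dots> \<le> 2 ^ 2 ^ 2 ^ (n + 1)" using p4 by (rule power_increasing) simp
  finally show ?thesis .
qed

theorem lemma2p8:
  fixes x :: "nat \<Rightarrow> nat"
  assumes "3 \<le> x 0"
    and "\<forall>i < E (x 0) + 8. x i < x (Suc i)"
  shows "cnf_less zero_cnf (fs_iter omega3 (map x [0..<E (x 0) + 9]))"
proof -
  define n where "n = E (x 0) + 8"
  \<comment> \<open>Only \<open>x 0, \<dots>, x n\<close> matter; extending them keeps \<open>x\<^sub>i \<ge> x\<^sub>0 + i\<close> for all \<open>i\<close>.\<close>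
  define y where "y i = (if i \<le> n then x i else x 0 + i)" for i
  have grow: "x 0 + i \<le> y i" for i
    using strictly_increasing_prefix_ge[of n x i] assms(2) by (simp add: y_def n_def)
  define a where "a = x 0 - 3"
  have a: "x 0 = Suc (Suc (Suc a))" using assms(1) by (simp add: a_def)
  have "map x [0..<Suc n] = map y [0..<Suc n]" and "y 0 = x 0" by (simp_all add: y_def)
  then have iter: "fs_iter omega3 (map x [0..<Suc n]) = omega2_poly (fs_run y 1 n (x 0, 0, 0))"
    by (simp only: fs_iter_omega3)
  obtain K where K: "fs_run y 1 K (x 0, 0, 0) = (a, 1, 0)" "2 ^ 2 ^ 2 ^ (x 0 + 1) \<le> 1 + K"
    using fs_run_three_omega_squares[OF grow] assms(1) a by auto
  have "n \<le> K" using K(2) E_plus_9_le_tower[OF assms(1)] by (simp add: n_def)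
  then have "fs_run y 1 n (x 0, 0, 0) \<noteq> (0, 0, 0)"
    using K(1) fs_run_stays_zero[of y 1 n "(x 0, 0, 0)" K] by auto
  moreover have "E (x 0) + 9 = Suc n" by (simp add: n_def)
  ultimately show ?thesis using iter by (simp only:) (rule omega2_poly_pos)
qed

end
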